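(* Let $\mathsf{T}$ be a rooted plane tree and $\delta\in\mathcal{O}(\mathsf{T})$. For each $u\in\mathsf{T}$, let $o_u$ be the minimal ornament of $\delta$ (i.e., among the sets $\delta(w)$, $w\in\mathsf{T}$) that properly contains $\delta(u)$; if no such ornament exists, let $o_u=\mathsf{T}$. Then $\delta\in\mathsf{Pop}(\mathcal{O}(\mathsf{T}))$ if and only if for every $u\in\mathsf{T}$ and every child $u'$ of $u$ with $u'\in\delta(u)$, we have $\Delta_{\delta(u)}(u')\neq\Delta_{o_u}(u')$.
   Context: A rooted plane tree $\mathsf{T}$ is a finite tree with a distinguished root $\mathfrak{r}$, regarded as a poset $\leq_\mathsf{T}$ in which $v'\leq_\mathsf{T} v$ iff $v$ lies on the path from $v'$ to $\mathfrak{r}$; the children of $v$ are the nodes covered by $v$. An ornament of $\mathsf{T}$ is a nonempty set of nodes inducing a connected subgraph. For a set $S$ of nodes and $u\in S$, $\Delta_S(u)=\{w\in S:w\leq_\mathsf{T} u\}$. An ornamentation of $\mathsf{T}$ is a map $\delta$ from $\mathsf{T}$ to ornaments such that (1) for every $v$, the unique maximal element of $\delta(v)$ is $v$; (2) for all $v,v'$, $\delta(v)$ and $\delta(v')$ are either nested or disjoint. $\mathcal{O}(\mathsf{T})$ is the set of ornamentations ordered by $\delta\leq\delta'$ iff $\delta(v)\subseteq\delta'(v)$ for all $v$; it is a lattice with meet $(\delta\wedge\delta')(v)=\delta(v)\cap\delta'(v)$. The pop-stack operator is $\mathsf{Pop}(\delta)=\bigwedge(\{\delta\}\cup\{\delta':\delta'\lessdot\delta\})$,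 where $\lessdot$ denotes the cover relation of $\mathcal{O}(\mathsf{T})$. *)

theory Defs
  imports Main
begin

text \<open>A rooted tree with node set V, root r and parent map par.
  The plane (sibling order) structure plays no role in the statement and is omitted.\<close>
definition rooted_tree :: "'a set \<Rightarrow> 'a \<Rightarrow> ('a \<Rightarrow> 'a) \<Rightarrow> bool" where
  "rooted_tree V r par \<longleftrightarrow> finite V \<and> r \<in> V \<and> par r = r \<and>
     (\<forall>v\<in>V. par v \<in> V) \<and> (\<forall>v\<in>V. \<exists>k. (par ^^ k) v = r)"

definition tree_le :: "('a \<Rightarrow> 'a) \<Rightarrow> 'a \<Rightarrow> 'a \<Rightarrow> bool" where
  "tree_le par v' v \<longleftrightarrow> (\<exists>k. (par ^^ k) v' = v)"

definition children :: "'a set \<Rightarrow> 'a \<Rightarrow> ('a \<Rightarrow> 'a) \<Rightarrow> 'a \<Rightarrow> 'a set" where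
  "children V r par v = {c \<in> V. c \<noteq> r \<and> par c = v}"

definition induced_adj :: "'a \<Rightarrow> ('a \<Rightarrow> 'a) \<Rightarrow> 'a set \<Rightarrow> ('a \<times> 'a) set" where
  "induced_adj r par S = {(x, y). x \<in> S \<and> y \<in> S \<and>
      ((x \<noteq> r \<and> par x = y) \<or> (y \<noteq> r \<and> par y = x))}"

definition ornament :: "'a set \<Rightarrow> 'a \<Rightarrow> ('a \<Rightarrow> 'a) \<Rightarrow> 'a set \<Rightarrow> bool" where
  "ornament V r par S \<longleftrightarrow> S \<noteq> {} \<and> S \<subseteq> V \<and>
     (\<forall>x\<in>S. \<forall>y\<in>S. (x, y) \<in> (induced_adj r par S)\<^sup>*)"

definition ornamentations :: "'a set \<Rightarrow> 'a \<Rightarrow> ('a \<Rightarrow> 'a) \<Rightarrow> ('a \<Rightarrow> 'a set) set" where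
  "ornamentations V r par = {\<delta>.
     (\<forall>v. v \<notin> V \<longrightarrow> \<delta> v = {}) \<and>
     (\<forall>v\<in>V. ornament V r par (\<delta> v) \<and> v \<in> \<delta> v \<and> (\<forall>w\<in>\<delta> v. tree_le par w v)) \<and>
     (\<forall>v\<in>V. \<forall>v'\<in>V. \<delta> v \<subseteq> \<delta> v' \<or> \<delta> v' \<subseteq> \<delta> v \<or> \<delta> v \<inter> \<delta> v' = {})}"

definition orn_le :: "'a set \<Rightarrow> ('a \<Rightarrow> 'a set) \<Rightarrow> ('a \<Rightarrow> 'a set) \<Rightarrow> bool" where
  "orn_le V \<delta> \<delta>' \<longleftrightarrow> (\<forall>v\<in>V. \<delta> v \<subseteq> \<delta>' v)"

definition orn_less :: "'a set \<Rightarrow> ('a \<Rightarrow> 'a set) \<Rightarrow> ('a \<Rightarrow> 'a set) \<Rightarrow> bool" where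
  "orn_less V \<delta> \<delta>' \<longleftrightarrow> orn_le V \<delta> \<delta>' \<and> \<not> orn_le V \<delta>' \<delta>"

definition orn_covered :: "'a set \<Rightarrow> 'a \<Rightarrow> ('a \<Rightarrow> 'a) \<Rightarrow> ('a \<Rightarrow> 'a set) \<Rightarrow> ('a \<Rightarrow> 'a set) \<Rightarrow> bool" where
  "orn_covered V r par \<delta>' \<delta> \<longleftrightarrow>
     \<delta>' \<in> ornamentations V r par \<and> \<delta> \<in> ornamentations V r par \<and> orn_less V \<delta>' \<delta> \<and>
     \<not> (\<exists>\<gamma>\<in>ornamentations V r par. orn_less V \<delta>' \<gamma> \<and> orn_less V \<gamma> \<delta>)"

text \<open>Pop(\<delta>) = meet of \<delta> and its lower covers; meet in O(T) is pointwise intersection.\<close>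
definition Pop :: "'a set \<Rightarrow> 'a \<Rightarrow> ('a \<Rightarrow> 'a) \<Rightarrow> ('a \<Rightarrow> 'a set) \<Rightarrow> ('a \<Rightarrow> 'a set)" where
  "Pop V r par \<delta> = (\<lambda>v. \<delta> v \<inter> (\<Inter>{\<delta>' v | \<delta>'. orn_covered V r par \<delta>' \<delta>}))"

definition Delta :: "('a \<Rightarrow> 'a) \<Rightarrow> 'a set \<Rightarrow> 'a \<Rightarrow> 'a set" where
  "Delta par S u = {w \<in> S. tree_le par w u}"

definition o_orn :: "'a set \<Rightarrow> ('a \<Rightarrow> 'a set) \<Rightarrow> 'a \<Rightarrow> 'a set" where
  "o_orn V \<delta> u =
     (let A = {\<delta> w | w. w \<in> V \<and> \<delta> u \<subset> \<delta> w} in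
      if A = {} then V else (THE S. S \<in> A \<and> (\<forall>S'\<in>A. S' \<subseteq> S \<longrightarrow> S' = S)))"

end

theory Submission
  imports Defs
begin

text \<open>
  The lower covers of an ornamentation \<open>\<epsilon>\<close> arise by cutting an ornament \<open>\<epsilon> x\<close> off \<open>\<epsilon> v\<close>,
  where \<open>\<epsilon> x\<close> is a maximal proper sub-ornament of \<open>\<epsilon> v\<close> containing all of \<open>\<epsilon> v\<close> below \<open>x\<close>;
  so \<open>Pop \<epsilon>\<close> removes all these detachable ornaments at once.

  If \<open>\<delta> = Pop \<epsilon>\<close> and \<open>u'\<close> is a child of \<open>u\<close> in \<open>\<delta> u\<close>, then some detachable ornament of \<open>\<epsilon>\<close>
  at \<open>u\<close> below \<open>u'\<close> was removed; its top lies in \<open>o\<^sub>u\<close> (it survives in every larger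
  ornament of \<open>\<delta>\<close>) but not in \<open>\<delta> u\<close>, so \<open>\<Delta>\<^bsub>\<delta>(u)\<^esub>(u') \<noteq> \<Delta>\<^bsub>o\<^sub>u\<^esub>(u')\<close>.

  Conversely, let \<open>\<epsilon> u = \<Delta>\<^bsub>o\<^sub>u\<^esub>(u)\<close>. This is an ornamentation whose detachable ornaments
  at \<open>v\<close> hang from the nodes where a path leaves \<open>\<delta> v\<close> inside \<open>o\<^sub>v\<close>, and these cover
  \<open>\<epsilon> v - \<delta> v\<close>. The hypothesis says exactly that no child of \<open>v\<close> inside \<open>\<delta> v\<close> is detachable,
  so nothing of \<open>\<delta> v\<close> is removed and \<open>Pop \<epsilon> = \<delta>\<close>.
\<close>

section \<open>The tree order\<close>

locale rtree =
  fixes V :: "'a set" and r :: 'a and par :: "'a \<Rightarrow> 'a"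
  assumes rooted_tree: "rooted_tree V r par"
begin

abbreviation tree_below :: "'a \<Rightarrow> 'a \<Rightarrow> bool" (infix \<open>\<preceq>\<close> 50)
  where "x \<preceq> y \<equiv> tree_le par x y"

lemma finite_V: "finite V" and par_root: "par r = r"
  and par_in_V: "v \<in> V \<Longrightarrow> par v \<in> V" and reaches_root: "v \<in> V \<Longrightarrow> \<exists>k. (par ^^ k) v = r"
  using rooted_tree unfolding rooted_tree_def by auto

lemma funpow_par_root: "(par ^^ k) r = r"
  by (induction k) (auto simp: par_root)

lemma funpow_par_in_V: "v \<in> V \<Longrightarrow> (par ^^ k) v \<in> V"
  by (induction k) (auto simp: par_in_V)

lemma funpow_par_Suc: "(par ^^ Suc k) x = (par ^^ k) (par x)"
  by (simp add: funpow_Suc_right del: funpow.simps)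

lemma tree_le_refl [simp]: "x \<preceq> x"
  unfolding tree_le_def by (metis funpow_0)

lemma tree_le_trans: "x \<preceq> y \<Longrightarrow> y \<preceq> z \<Longrightarrow> x \<preceq> z"
  unfolding tree_le_def by (metis funpow_add comp_apply)

lemma tree_le_in_V: "x \<in> V \<Longrightarrow> x \<preceq> y \<Longrightarrow> y \<in> V"
  unfolding tree_le_def using funpow_par_in_V by blast

lemma tree_le_par_self: "x \<preceq> par x"
  unfolding tree_le_def by (rule exI[of _ 1]) simp

lemma tree_le_par: assumes "x \<preceq> y" "x \<noteq> y" shows "par x \<preceq> y"
proof -
  obtain k where k: "(par ^^ k) x = y" using assms(1) unfolding tree_le_def by blast
  with assms(2) obtain k' where "k = Suc k'" by (cases k) auto
  with k show ?thesis unfolding tree_le_def by (metis funpow_par_Suc)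
qed

lemma funpow_par_cycle: assumes "x \<in> V" "(par ^^ n) x = x" "n > 0" shows "x = r"
proof -
  obtain k where k: "(par ^^ k) x = r" using reaches_root assms(1) by blast
  have "(par ^^ (m * n)) x = x" for m
    by (induction m) (simp_all add: funpow_add assms(2))
  moreover have "(par ^^ (k * n)) x = r"
  proof -
    have "k * n = (k * n - k) + k" using assms(3) by simp
    then show ?thesis using k funpow_par_root by (metis funpow_add comp_apply)
  qed
  ultimately show ?thesis by metis
qed

lemma tree_le_antisym: assumes "x \<in> V" "x \<preceq> y" "y \<preceq> x" shows "x = y"
proof -
  obtain a b where a: "(par ^^ a) x = y" and b: "(par ^^ b) y = x"
    using assms unfolding tree_le_def by blast
  then have "(par ^^ (b + a)) x = x" by (simp add: funpow_add)
  then have "b + a = 0 \<or> x = r" using funpow_par_cycle[OF assms(1)] by blast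
  then show ?thesis using a funpow_par_root by auto
qed

lemma par_neq_self: "x \<in> V \<Longrightarrow> x \<noteq> r \<Longrightarrow> par x \<noteq> x"
  using funpow_par_cycle[of x 1] by auto

lemma tree_le_linear:
  assumes "z \<preceq> a" "z \<preceq> b" shows "a \<preceq> b \<or> b \<preceq> a"
proof -
  obtain i j where i: "(par ^^ i) z = a" and j: "(par ^^ j) z = b"
    using assms unfolding tree_le_def by blast
  have "(par ^^ (j - i)) a = b" if "i \<le> j"
    using i j that by (metis funpow_add comp_apply le_add_diff_inverse2)
  moreover have "(par ^^ (i - j)) b = a" if "j \<le> i"
    using i j that by (metis funpow_add comp_apply le_add_diff_inverse2)
  ultimately show ?thesis unfolding tree_le_def by (meson nat_le_linear)
qed

lemma exists_entry_edge:
  assumes "y \<preceq> u" "y \<notin> S" "u \<in> S"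
  shows "\<exists>c. y \<preceq> c \<and> c \<preceq> u \<and> c \<notin> S \<and> c \<noteq> r \<and> par c \<in> S"
proof -
  obtain k where "(par ^^ k) y = u" using assms(1) unfolding tree_le_def by blast
  then show ?thesis using assms(2)
  proof (induction k arbitrary: y)
    case 0
    then show ?case using assms(3) by simp
  next
    case (Suc k)
    show ?case
    proof (cases "par y \<in> S")
      case True
      moreover have "y \<preceq> u" using Suc.prems(1) unfolding tree_le_def by blast
      ultimately show ?thesis using Suc.prems(2) par_root by (metis tree_le_refl)
    next
      case False
      then show ?thesis
        using Suc.IH[of "par y"] Suc.prems(1) tree_le_trans tree_le_par_self
        by (metis funpow_par_Suc)
    qed
  qed
qed

lemma exists_child_above:
  assumes "x \<preceq> u" "x \<noteq> u" shows "\<exists>c. x \<preceq> c \<and> c \<noteq> r \<and> par c = u"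
  using exists_entry_edge[of x u "{u}"] assms by auto

section \<open>Ornamentations\<close>

definition hangs_from :: "'a set \<Rightarrow> 'a \<Rightarrow> bool" where
  "hangs_from S v \<longleftrightarrow> S \<subseteq> V \<and> v \<in> S \<and> (\<forall>w\<in>S. w \<preceq> v) \<and> (\<forall>w\<in>S. w \<noteq> v \<longrightarrow> par w \<in> S)"

text \<open>Along an induced path starting at \<open>w\<close>, one can only climb above \<open>w\<close> through \<open>par w\<close>.\<close>
lemma ornament_par_closed:
  assumes orn: "ornament V r par S" and "v \<in> S" and top: "\<forall>w\<in>S. w \<preceq> v"
    and "w \<in> S" "w \<noteq> v"
  shows "par w \<in> S"
proof (rule ccontr)
  assume par_out: "par w \<notin> S"
  have "(w, y) \<in> (induced_adj r par S)\<^sup>* \<Longrightarrow> y \<preceq> w" for y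
  proof (induction rule: rtrancl_induct)
    case (step y z)
    then have "z \<in> S" and edge: "par y = z \<or> par z = y"
      unfolding induced_adj_def by auto
    from edge show ?case
    proof
      assume "par y = z"
      with \<open>z \<in> S\<close> par_out have "y \<noteq> w" by blast
      with \<open>par y = z\<close> step.IH show ?case using tree_le_par by blast
    next
      assume "par z = y"
      then show ?case using step.IH tree_le_par_self tree_le_trans by metis
    qed
  qed simp
  moreover have "(w, v) \<in> (induced_adj r par S)\<^sup>*"
    using orn \<open>w \<in> S\<close> \<open>v \<in> S\<close> unfolding ornament_def by blast
  ultimately have "v \<preceq> w" by blast
  then show False
    using tree_le_antisym top assms(4,5) orn unfolding ornament_def by blast
qed

lemma hangs_from_ornament:
  assumes "hangs_from S v" shows "ornament V r par S"
proof -
  have SV: "S \<subseteq> V" and "v \<in> S" and top: "\<forall>w\<in>S. w \<preceq> v"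
    and closed: "\<forall>w\<in>S. w \<noteq> v \<longrightarrow> par w \<in> S"
    using assms unfolding hangs_from_def by auto
  let ?A = "induced_adj r par S"
  have "(par ^^ k) x = v \<Longrightarrow> x \<in> S \<Longrightarrow> (x, v) \<in> ?A\<^sup>* \<and> (v, x) \<in> ?A\<^sup>*" for k x
  proof (induction k arbitrary: x)
    case (Suc k)
    show ?case
    proof (cases "x = v")
      case False
      then have "par x \<in> S" using closed Suc.prems(2) by blast
      have "x \<noteq> r"
      proof
        assume "x = r"
        then have "v = r" using Suc.prems(1) funpow_par_root[of "Suc k"] by simp
        with \<open>x = r\<close> False show False by simp
      qed
      then have "(x, par x) \<in> ?A" "(par x, x) \<in> ?A"
        using Suc.prems(2) \<open>par x \<in> S\<close> unfolding induced_adj_def by auto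
      moreover have "(par ^^ k) (par x) = v" using Suc.prems(1) unfolding funpow_par_Suc .
      then have "(par x, v) \<in> ?A\<^sup>*" "(v, par x) \<in> ?A\<^sup>*"
        using Suc.IH \<open>par x \<in> S\<close> by blast+
      ultimately show ?thesis
        by (meson converse_rtrancl_into_rtrancl rtrancl_into_rtrancl)
    qed simp
  qed simp
  then have "x \<in> S \<Longrightarrow> (x, v) \<in> ?A\<^sup>* \<and> (v, x) \<in> ?A\<^sup>*" for x
    using top unfolding tree_le_def by blast
  then have "\<forall>x\<in>S. \<forall>y\<in>S. (x, y) \<in> ?A\<^sup>*"
    by (meson rtrancl_trans)
  then show ?thesis
    unfolding ornament_def using SV \<open>v \<in> S\<close> by blast
qed

lemma hangs_from_convex:
  assumes S: "hangs_from S v" and "w \<in> S" "w \<preceq> y" "y \<preceq> v"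
  shows "y \<in> S"
proof -
  obtain i where "(par ^^ i) w = y" using assms(3) unfolding tree_le_def by blast
  then show ?thesis using assms(2,3)
  proof (induction i arbitrary: w)
    case (Suc i)
    show ?case
    proof (cases "w = v")
      case True
      have "v \<in> V" using S unfolding hangs_from_def by blast
      with True Suc.prems(3) assms(4) have "w = y" using tree_le_antisym by blast
      then show ?thesis using Suc.prems(2) by simp
    next
      case False
      then have "par w \<in> S" using S Suc.prems(2) unfolding hangs_from_def by blast
      moreover have "(par ^^ i) (par w) = y" using Suc.prems(1) unfolding funpow_par_Suc .
      ultimately show ?thesis using Suc.IH unfolding tree_le_def by blast
    qed
  qed simp
qed

definition laminar :: "('a \<Rightarrow> 'a set) \<Rightarrow> bool" where
  "laminar \<delta> \<longleftrightarrow> (\<forall>v\<in>V. \<forall>w\<in>V. \<delta> v \<subseteq> \<delta> w \<or> \<delta> w \<subseteq> \<delta> v \<or> \<delta> v \<inter> \<delta> w = {})"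

lemma ornament_with_top_iff:
  "ornament V r par S \<and> v \<in> S \<and> (\<forall>w\<in>S. w \<preceq> v) \<longleftrightarrow> hangs_from S v"
proof
  assume h: "ornament V r par S \<and> v \<in> S \<and> (\<forall>w\<in>S. w \<preceq> v)"
  then have "S \<subseteq> V" unfolding ornament_def by blast
  moreover have "\<forall>w\<in>S. w \<noteq> v \<longrightarrow> par w \<in> S"
    using h ornament_par_closed[of S v] by blast
  ultimately show "hangs_from S v" using h unfolding hangs_from_def by blast
next
  assume "hangs_from S v"
  then show "ornament V r par S \<and> v \<in> S \<and> (\<forall>w\<in>S. w \<preceq> v)"
    using hangs_from_ornament unfolding hangs_from_def by blast
qed

lemma ornamentations_iff:
  "\<delta> \<in> ornamentations V r par \<longleftrightarrow>
     (\<forall>v. v \<notin> V \<longrightarrow> \<delta> v = {}) \<and> (\<forall>v\<in>V. hangs_from (\<delta> v) v) \<and> laminar \<delta>"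
  unfolding ornamentations_def laminar_def mem_Collect_eq by (simp only: ornament_with_top_iff)

abbreviation Orn :: "('a \<Rightarrow> 'a set) set" where "Orn \<equiv> ornamentations V r par"

context
  fixes \<delta> assumes \<delta>: "\<delta> \<in> Orn"
begin

lemma orn_outside: "v \<notin> V \<Longrightarrow> \<delta> v = {}"
  using \<delta> ornamentations_iff by blast

lemma orn_hangs_from: "v \<in> V \<Longrightarrow> hangs_from (\<delta> v) v"
  using \<delta> ornamentations_iff by blast

lemma orn_laminar: "v \<in> V \<Longrightarrow> w \<in> V \<Longrightarrow> \<delta> v \<subseteq> \<delta> w \<or> \<delta> w \<subseteq> \<delta> v \<or> \<delta> v \<inter> \<delta> w = {}"
  using \<delta> ornamentations_iff unfolding laminar_def by blast

lemma orn_top_in_V: "w \<in> \<delta> v \<Longrightarrow> v \<in> V"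
  using orn_outside by blast

lemma orn_in_V: "w \<in> \<delta> v \<Longrightarrow> w \<in> V"
  using orn_top_in_V orn_hangs_from unfolding hangs_from_def by blast

lemma orn_self: "v \<in> V \<Longrightarrow> v \<in> \<delta> v"
  using orn_hangs_from unfolding hangs_from_def by blast

lemma orn_below: "w \<in> \<delta> v \<Longrightarrow> w \<preceq> v"
  using orn_top_in_V orn_hangs_from unfolding hangs_from_def by blast

lemma orn_par: "w \<in> \<delta> v \<Longrightarrow> w \<noteq> v \<Longrightarrow> par w \<in> \<delta> v"
  using orn_top_in_V orn_hangs_from unfolding hangs_from_def by blast

lemma orn_convex: "w \<in> \<delta> v \<Longrightarrow> w \<preceq> y \<Longrightarrow> y \<preceq> v \<Longrightarrow> y \<in> \<delta> v"
  using orn_top_in_V orn_hangs_from hangs_from_convex by blast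

lemma orn_finite: "finite (\<delta> v)"
  using finite_V by (rule finite_subset[rotated]) (use orn_in_V in blast)

lemma orn_nested: "y \<in> \<delta> v \<Longrightarrow> y \<in> \<delta> w \<Longrightarrow> \<delta> v \<subseteq> \<delta> w \<or> \<delta> w \<subseteq> \<delta> v"
  using orn_laminar orn_top_in_V by blast

lemma orn_inj: assumes "v \<in> V" "w \<in> V" "\<delta> v = \<delta> w" shows "v = w"
proof -
  have "v \<preceq> w" "w \<preceq> v" using assms orn_self orn_below by metis+
  then show ?thesis using tree_le_antisym assms(1) by blast
qed

lemma orn_subset: assumes "w \<in> \<delta> v" shows "\<delta> w \<subseteq> \<delta> v"
proof -
  have "v \<in> V" "w \<in> V" using assms orn_in_V orn_top_in_V by blast+
  have "\<delta> v \<subseteq> \<delta> w \<or> \<delta> w \<subseteq> \<delta> v" using orn_nested[OF assms orn_self[OF \<open>w \<in> V\<close>]] .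
  moreover have "\<delta> v \<subseteq> \<delta> w \<Longrightarrow> v = w"
    using orn_self[OF \<open>v \<in> V\<close>] orn_below assms tree_le_antisym[OF \<open>v \<in> V\<close>] by blast
  ultimately show ?thesis by blast
qed

lemma orn_psubset: "w \<in> \<delta> v \<Longrightarrow> w \<noteq> v \<Longrightarrow> \<delta> w \<subset> \<delta> v"
  using orn_subset orn_inj orn_in_V orn_top_in_V by blast

lemma orn_not_above: assumes "w \<in> \<delta> v" "w \<noteq> v" shows "v \<notin> \<delta> w"
proof
  assume "v \<in> \<delta> w"
  then have "v \<preceq> w" "w \<preceq> v" using assms(1) orn_below by blast+
  then show False using tree_le_antisym assms orn_in_V by blast
qed

end

section \<open>Lower covers and \<open>Pop\<close>\<close>

definition outermost :: "('a \<Rightarrow> 'a set) \<Rightarrow> 'a \<Rightarrow> 'a \<Rightarrow> bool" where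
  "outermost \<delta> v x \<longleftrightarrow> (\<forall>w\<in>\<delta> v. w \<noteq> v \<longrightarrow> x \<in> \<delta> w \<longrightarrow> w = x)"

definition detachable :: "('a \<Rightarrow> 'a set) \<Rightarrow> 'a \<Rightarrow> 'a \<Rightarrow> bool" where
  "detachable \<delta> v x \<longleftrightarrow>
     v \<in> V \<and> x \<in> \<delta> v \<and> x \<noteq> v \<and> Delta par (\<delta> v) x = \<delta> x \<and> outermost \<delta> v x"

context
  fixes \<delta> assumes \<delta>: "\<delta> \<in> Orn"
begin

lemma exists_outermost_above:
  assumes "y \<in> \<delta> v" "y \<noteq> v"
  obtains m where "m \<in> \<delta> v" "m \<noteq> v" "y \<in> \<delta> m" "outermost \<delta> v m"
proof -
  let ?W = "{w \<in> \<delta> v. w \<noteq> v \<and> y \<in> \<delta> w}"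
  have "y \<in> ?W" using assms orn_self[OF \<delta>] orn_in_V[OF \<delta>] by blast
  moreover have "finite (\<delta> ` ?W)" using orn_finite[OF \<delta>] by simp
  ultimately obtain M where "M \<in> \<delta> ` ?W" and max: "\<forall>S\<in>\<delta> ` ?W. M \<subseteq> S \<longrightarrow> M = S"
    using finite_has_maximal2[of "\<delta> ` ?W" "\<delta> y"] by blast
  then obtain m where m: "m \<in> ?W" "M = \<delta> m" by blast
  have "outermost \<delta> v m" unfolding outermost_def
  proof (intro ballI impI)
    fix w assume w: "w \<in> \<delta> v" "w \<noteq> v" "m \<in> \<delta> w"
    then have "\<delta> m \<subseteq> \<delta> w" using orn_subset[OF \<delta>] by blast
    moreover have "w \<in> ?W" using w m calculation by blast
    ultimately have "\<delta> m = \<delta> w" using max m(2) by blast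
    moreover have "m \<in> V" "w \<in> V" using w(1) m(1) orn_in_V[OF \<delta>] by blast+
    ultimately show "w = m" using orn_inj[OF \<delta>] by metis
  qed
  with m that show ?thesis by blast
qed

lemma exists_outermost_strictly_below:
  assumes "x\<^sub>0 \<in> \<delta> v" "x\<^sub>0 \<noteq> v" "outermost \<delta> v x\<^sub>0" "Delta par (\<delta> v) x\<^sub>0 \<noteq> \<delta> x\<^sub>0"
  obtains m where "m \<in> \<delta> v" "m \<noteq> v" "outermost \<delta> v m" "m \<preceq> x\<^sub>0" "m \<noteq> x\<^sub>0"
proof -
  have "\<delta> x\<^sub>0 \<subseteq> Delta par (\<delta> v) x\<^sub>0"
    using orn_subset[OF \<delta>] orn_below[OF \<delta>] assms(1) unfolding Delta_def by blast
  then obtain y where y: "y \<in> \<delta> v" "y \<preceq> x\<^sub>0" "y \<notin> \<delta> x\<^sub>0"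
    using assms(4) unfolding Delta_def by blast
  have "y \<noteq> v"
    using y(2) assms(1,2) orn_below[OF \<delta>] orn_in_V[OF \<delta>] tree_le_antisym by blast
  then obtain m where m: "m \<in> \<delta> v" "m \<noteq> v" "y \<in> \<delta> m" "outermost \<delta> v m"
    using exists_outermost_above y(1) by blast
  have "m \<noteq> x\<^sub>0" using m(3) y(3) by blast
  have "m \<preceq> x\<^sub>0"
  proof (rule ccontr)
    assume "\<not> m \<preceq> x\<^sub>0"
    then have "x\<^sub>0 \<preceq> m" using tree_le_linear orn_below[OF \<delta> m(3)] y(2) by blast
    then have "x\<^sub>0 \<in> \<delta> m" using orn_convex[OF \<delta> m(3) y(2)] by blast
    then show False using assms(3) m \<open>m \<noteq> x\<^sub>0\<close> unfolding outermost_def by blast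
  qed
  with m \<open>m \<noteq> x\<^sub>0\<close> that show ?thesis by blast
qed

lemma exists_detachable_below:
  assumes "v \<in> V" "x\<^sub>0 \<in> \<delta> v" "x\<^sub>0 \<noteq> v" "outermost \<delta> v x\<^sub>0"
  obtains x where "detachable \<delta> v x" "x \<preceq> x\<^sub>0"
proof -
  have "\<exists>x. detachable \<delta> v x \<and> x \<preceq> x\<^sub>0" using assms(2-4)
  proof (induction "card (Delta par (\<delta> v) x\<^sub>0)" arbitrary: x\<^sub>0 rule: less_induct)
    case less
    show ?case
    proof (cases "Delta par (\<delta> v) x\<^sub>0 = \<delta> x\<^sub>0")
      case True
      then show ?thesis using less.prems assms(1) unfolding detachable_def by auto
    next
      case False
      then obtain m where m: "m \<in> \<delta> v" "m \<noteq> v" "outermost \<delta> v m" "m \<preceq> x\<^sub>0" "m \<noteq> x\<^sub>0"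
        using exists_outermost_strictly_below less.prems by blast
      have "Delta par (\<delta> v) m \<subset> Delta par (\<delta> v) x\<^sub>0"
      proof -
        have "x\<^sub>0 \<notin> Delta par (\<delta> v) m"
          using m(4,5) tree_le_antisym orn_in_V[OF \<delta> m(1)] unfolding Delta_def by blast
        moreover have "x\<^sub>0 \<in> Delta par (\<delta> v) x\<^sub>0" using less.prems(1) unfolding Delta_def by simp
        ultimately show ?thesis using m(4) tree_le_trans unfolding Delta_def by blast
      qed
      then have "card (Delta par (\<delta> v) m) < card (Delta par (\<delta> v) x\<^sub>0)"
        by (rule psubset_card_mono[rotated]) (simp add: Delta_def orn_finite[OF \<delta>])
      then obtain x where "detachable \<delta> v x" "x \<preceq> m" using less.hyps m(1-3) by blast
      then show ?thesis using m(4) tree_le_trans by blast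
    qed
  qed
  then show ?thesis using that by blast
qed

lemma detach_hangs_from:
  assumes det: "detachable \<delta> v x" shows "hangs_from (\<delta> v - \<delta> x) v"
proof -
  have "v \<in> V" "x \<in> \<delta> v" "x \<noteq> v" and below_x: "Delta par (\<delta> v) x = \<delta> x"
    using det unfolding detachable_def by auto
  have "v \<notin> \<delta> x" using orn_not_above[OF \<delta> \<open>x \<in> \<delta> v\<close> \<open>x \<noteq> v\<close>] .
  moreover have "par w \<notin> \<delta> x" if "w \<in> \<delta> v - \<delta> x" for w
  proof
    assume "par w \<in> \<delta> x"
    then have "w \<preceq> x" using orn_below[OF \<delta>] tree_le_par_self tree_le_trans by blast
    then have "w \<in> Delta par (\<delta> v) x" using that unfolding Delta_def by blast
    with that below_x show False by blast
  qed
  ultimately show ?thesis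
    using orn_hangs_from[OF \<delta> \<open>v \<in> V\<close>] unfolding hangs_from_def by blast
qed

lemma detach_laminar:
  assumes det: "detachable \<delta> v x" and "w \<in> V" "w \<noteq> v"
  shows "\<delta> v - \<delta> x \<subseteq> \<delta> w \<or> \<delta> w \<subseteq> \<delta> v - \<delta> x \<or> (\<delta> v - \<delta> x) \<inter> \<delta> w = {}"
proof -
  have "v \<in> V" "x \<in> \<delta> v" and out: "outermost \<delta> v x"
    using det unfolding detachable_def by auto
  consider "\<delta> v \<subseteq> \<delta> w" | "\<delta> v \<inter> \<delta> w = {}" | "\<delta> w \<subseteq> \<delta> v"
    using orn_laminar[OF \<delta> \<open>v \<in> V\<close> \<open>w \<in> V\<close>] by blast
  then show ?thesis
  proof cases
    case 3
    then have "w \<in> \<delta> v" using orn_self[OF \<delta> \<open>w \<in> V\<close>] by blast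
    show ?thesis
    proof (cases "w \<in> \<delta> x")
      case True
      then show ?thesis using orn_subset[OF \<delta>] by blast
    next
      case False
      have "\<delta> w \<inter> \<delta> x = {}"
      proof (rule ccontr)
        assume "\<delta> w \<inter> \<delta> x \<noteq> {}"
        then have "\<delta> w \<subseteq> \<delta> x \<or> \<delta> x \<subseteq> \<delta> w" using orn_nested[OF \<delta>] by blast
        moreover have "\<not> \<delta> w \<subseteq> \<delta> x" using False orn_self[OF \<delta> \<open>w \<in> V\<close>] by blast
        ultimately have "x \<in> \<delta> w" using orn_self[OF \<delta>] orn_in_V[OF \<delta> \<open>x \<in> \<delta> v\<close>] by blast
        then have "w = x" using out \<open>w \<in> \<delta> v\<close> \<open>w \<noteq> v\<close> unfolding outermost_def by blast
        with False \<open>x \<in> \<delta> w\<close> show False by blast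
      qed
      with 3 show ?thesis by blast
    qed
  qed blast+
qed

lemma detach_ornamentation:
  assumes det: "detachable \<delta> v x" shows "\<delta>(v := \<delta> v - \<delta> x) \<in> Orn"
proof -
  have "v \<in> V" using det unfolding detachable_def by blast
  have "laminar (\<delta>(v := \<delta> v - \<delta> x))"
    unfolding laminar_def
    using detach_laminar[OF det] orn_laminar[OF \<delta>] by (auto simp: Int_commute)
  then show ?thesis
    unfolding ornamentations_iff
    using orn_outside[OF \<delta>] orn_hangs_from[OF \<delta>] detach_hangs_from[OF det] \<open>v \<in> V\<close> by auto
qed

lemma detach_less:
  assumes det: "detachable \<delta> v x" shows "orn_less V (\<delta>(v := \<delta> v - \<delta> x)) \<delta>"
proof -
  have "v \<in> V" "x \<in> \<delta> v" "x \<in> \<delta> x"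
    using det orn_self[OF \<delta>] orn_in_V[OF \<delta>] unfolding detachable_def by auto
  then show ?thesis unfolding orn_less_def orn_le_def by auto
qed

end

lemma detach_covered:
  assumes \<delta>: "\<delta> \<in> Orn" and det: "detachable \<delta> v x"
  shows "orn_covered V r par (\<delta>(v := \<delta> v - \<delta> x)) \<delta>"
proof -
  let ?\<delta>' = "\<delta>(v := \<delta> v - \<delta> x)"
  have "v \<in> V" "x \<in> \<delta> v" "x \<noteq> v" using det unfolding detachable_def by auto
  have "x \<in> V" using orn_in_V[OF \<delta> \<open>x \<in> \<delta> v\<close>] .
  have "\<not> (orn_less V ?\<delta>' \<gamma> \<and> orn_less V \<gamma> \<delta>)" if \<gamma>: "\<gamma> \<in> Orn" for \<gamma>
  proof
    assume "orn_less V ?\<delta>' \<gamma> \<and> orn_less V \<gamma> \<delta>"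
    then have lower: "orn_less V ?\<delta>' \<gamma>" and upper: "orn_less V \<gamma> \<delta>" by auto
    then have le1: "\<And>w. w \<in> V \<Longrightarrow> ?\<delta>' w \<subseteq> \<gamma> w" and le2: "\<And>w. w \<in> V \<Longrightarrow> \<gamma> w \<subseteq> \<delta> w"
      unfolding orn_less_def orn_le_def by auto
    have same: "\<forall>w\<in>V. w \<noteq> v \<longrightarrow> \<gamma> w = \<delta> w"
      using le1 le2 by fastforce
    have "\<delta> v - \<delta> x \<subseteq> \<gamma> v" "\<gamma> v \<subseteq> \<delta> v" using le1[OF \<open>v \<in> V\<close>] le2[OF \<open>v \<in> V\<close>] by auto
    have "\<gamma> x = \<delta> x" using same \<open>x \<in> V\<close> \<open>x \<noteq> v\<close> by blast
    show False
    proof (cases "\<gamma> v \<inter> \<delta> x = {}")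
      case True
      with \<open>\<gamma> v \<subseteq> \<delta> v\<close> have "orn_le V \<gamma> ?\<delta>'"
        using same unfolding orn_le_def by auto
      with lower show False unfolding orn_less_def by blast
    next
      case False
      then have "\<gamma> v \<subseteq> \<gamma> x \<or> \<gamma> x \<subseteq> \<gamma> v" using orn_nested[OF \<gamma>] \<open>\<gamma> x = \<delta> x\<close> by blast
      moreover have "\<not> \<gamma> v \<subseteq> \<gamma> x"
        using orn_self[OF \<gamma> \<open>v \<in> V\<close>] \<open>\<gamma> x = \<delta> x\<close> orn_not_above[OF \<delta> \<open>x \<in> \<delta> v\<close> \<open>x \<noteq> v\<close>] by blast
      ultimately have "\<delta> v \<subseteq> \<gamma> v" using \<open>\<gamma> x = \<delta> x\<close> \<open>\<delta> v - \<delta> x \<subseteq> \<gamma> v\<close> by blast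
      then have "orn_le V \<delta> \<gamma>" using same unfolding orn_le_def by auto
      with upper show False unfolding orn_less_def by blast
    qed
  qed
  then show ?thesis
    unfolding orn_covered_def using detach_ornamentation[OF \<delta> det] \<delta> detach_less[OF \<delta> det] by blast
qed

lemma exists_minimal_change:
  assumes \<delta>: "\<delta> \<in> Orn" and less: "orn_less V \<delta>' \<delta>"
  obtains v where "v \<in> V" "\<delta>' v \<noteq> \<delta> v" "\<And>w. w \<in> \<delta> v \<Longrightarrow> w \<noteq> v \<Longrightarrow> \<delta>' w = \<delta> w"
proof -
  let ?C = "{v \<in> V. \<delta>' v \<noteq> \<delta> v}"
  obtain v\<^sub>0 where "v\<^sub>0 \<in> ?C" using less unfolding orn_less_def orn_le_def by blast
  moreover have "finite (\<delta> ` ?C)" using finite_V by simp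
  ultimately obtain S where "S \<in> \<delta> ` ?C" and min: "\<forall>S'\<in>\<delta> ` ?C. S' \<subseteq> S \<longrightarrow> S = S'"
    using finite_has_minimal2[of "\<delta> ` ?C" "\<delta> v\<^sub>0"] by blast
  then obtain v where v: "v \<in> ?C" "S = \<delta> v" by blast
  have "\<delta>' w = \<delta> w" if "w \<in> \<delta> v" "w \<noteq> v" for w
  proof (rule ccontr)
    assume "\<delta>' w \<noteq> \<delta> w"
    moreover have "w \<in> V" using orn_in_V[OF \<delta> \<open>w \<in> \<delta> v\<close>] .
    ultimately have "w \<in> ?C" by blast
    moreover have "\<forall>u\<in>?C. \<delta> u \<subseteq> \<delta> v \<longrightarrow> \<delta> v = \<delta> u" using min v(2) by simp
    ultimately have "\<delta> w \<subseteq> \<delta> v \<longrightarrow> \<delta> v = \<delta> w" by blast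
    then show False using orn_psubset[OF \<delta> that] by blast
  qed
  with v that show ?thesis by blast
qed

lemma exists_detachable_avoiding:
  assumes \<delta>: "\<delta> \<in> Orn" and \<delta>': "\<delta>' \<in> Orn" and less: "orn_less V \<delta>' \<delta>"
  obtains v x where "detachable \<delta> v x" "\<delta> x \<inter> \<delta>' v = {}"
proof -
  obtain v where "v \<in> V" "\<delta>' v \<noteq> \<delta> v" and same: "\<And>w. w \<in> \<delta> v \<Longrightarrow> w \<noteq> v \<Longrightarrow> \<delta>' w = \<delta> w"
    using exists_minimal_change[OF \<delta> less] by blast
  moreover have "\<delta>' v \<subseteq> \<delta> v" using less \<open>v \<in> V\<close> unfolding orn_less_def orn_le_def by blast
  ultimately obtain y where y: "y \<in> \<delta> v" "y \<notin> \<delta>' v" by blast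
  then have "y \<noteq> v" using orn_self[OF \<delta>' \<open>v \<in> V\<close>] by blast
  then obtain m where m: "m \<in> \<delta> v" "m \<noteq> v" "y \<in> \<delta> m" "outermost \<delta> v m"
    using exists_outermost_above[OF \<delta> y(1)] by blast
  have "m \<notin> \<delta>' v"
  proof
    assume "m \<in> \<delta>' v"
    have "\<delta>' m = \<delta> m" using same m(1,2) .
    moreover have "m \<in> V" using orn_in_V[OF \<delta> m(1)] .
    ultimately have "\<delta> m \<subseteq> \<delta>' v \<or> \<delta>' v \<subseteq> \<delta> m"
      using orn_nested[OF \<delta>' \<open>m \<in> \<delta>' v\<close>] orn_self[OF \<delta>'] by metis
    moreover have "\<not> \<delta>' v \<subseteq> \<delta> m"
      using orn_self[OF \<delta>' \<open>v \<in> V\<close>] orn_not_above[OF \<delta> m(1,2)] by blast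
    ultimately show False using y(2) m(3) by blast
  qed
  obtain x where x: "detachable \<delta> v x" "x \<preceq> m"
    using exists_detachable_below[OF \<delta> \<open>v \<in> V\<close> m(1,2,4)] .
  have "\<delta> x \<inter> \<delta>' v = {}"
  proof (rule ccontr)
    assume "\<delta> x \<inter> \<delta>' v \<noteq> {}"
    then obtain z where z: "z \<in> \<delta> x" "z \<in> \<delta>' v" by blast
    have "z \<preceq> m" using orn_below[OF \<delta> z(1)] x(2) tree_le_trans by blast
    then have "m \<in> \<delta>' v" using orn_convex[OF \<delta>' z(2)] orn_below[OF \<delta> m(1)] by blast
    with \<open>m \<notin> \<delta>' v\<close> show False by blast
  qed
  with x that show ?thesis by blast
qed

lemma covered_imp_detach:
  assumes cov: "orn_covered V r par \<delta>' \<delta>"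
  obtains v x where "detachable \<delta> v x" "\<delta>' = \<delta>(v := \<delta> v - \<delta> x)"
proof -
  have \<delta>: "\<delta> \<in> Orn" and \<delta>': "\<delta>' \<in> Orn" and less: "orn_less V \<delta>' \<delta>"
    and nothing_between: "\<not> (\<exists>\<gamma>\<in>Orn. orn_less V \<delta>' \<gamma> \<and> orn_less V \<gamma> \<delta>)"
    using cov unfolding orn_covered_def by auto
  obtain v x where det: "detachable \<delta> v x" and avoid: "\<delta> x \<inter> \<delta>' v = {}"
    using exists_detachable_avoiding[OF \<delta> \<delta>' less] .
  have "v \<in> V" using det unfolding detachable_def by blast
  let ?\<delta>\<^sub>1 = "\<delta>(v := \<delta> v - \<delta> x)"
  have "orn_le V \<delta>' ?\<delta>\<^sub>1" unfolding orn_le_def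
  proof
    fix w assume "w \<in> V"
    then have "\<delta>' w \<subseteq> \<delta> w" using less unfolding orn_less_def orn_le_def by blast
    then show "\<delta>' w \<subseteq> ?\<delta>\<^sub>1 w" using avoid by auto
  qed
  moreover have "\<not> orn_less V \<delta>' ?\<delta>\<^sub>1"
    using nothing_between detach_ornamentation[OF \<delta> det] detach_less[OF \<delta> det] by blast
  ultimately have "orn_le V ?\<delta>\<^sub>1 \<delta>'" unfolding orn_less_def by blast
  have "\<delta>' = ?\<delta>\<^sub>1"
  proof
    fix w
    show "\<delta>' w = ?\<delta>\<^sub>1 w"
    proof (cases "w \<in> V")
      case True
      then show ?thesis
        using \<open>orn_le V \<delta>' ?\<delta>\<^sub>1\<close> \<open>orn_le V ?\<delta>\<^sub>1 \<delta>'\<close> unfolding orn_le_def by blast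
    next
      case False
      then show ?thesis using orn_outside[OF \<delta>] orn_outside[OF \<delta>'] \<open>v \<in> V\<close> by auto
    qed
  qed
  with det that show ?thesis by blast
qed

lemma Pop_mem_iff:
  assumes \<delta>: "\<delta> \<in> Orn"
  shows "y \<in> Pop V r par \<delta> v \<longleftrightarrow> y \<in> \<delta> v \<and> (\<forall>x. detachable \<delta> v x \<longrightarrow> y \<notin> \<delta> x)"
proof -
  have covers: "orn_covered V r par \<delta>' \<delta> \<longleftrightarrow> (\<exists>v x. detachable \<delta> v x \<and> \<delta>' = \<delta>(v := \<delta> v - \<delta> x))"
    for \<delta>'
    using detach_covered[OF \<delta>] covered_imp_detach by metis
  have "y \<in> Pop V r par \<delta> v \<longleftrightarrow> y \<in> \<delta> v \<and> (\<forall>\<delta>'. orn_covered V r par \<delta>' \<delta> \<longrightarrow> y \<in> \<delta>' v)"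
    unfolding Pop_def by blast
  also have "\<dots> \<longleftrightarrow> y \<in> \<delta> v \<and> (\<forall>v' x. detachable \<delta> v' x \<longrightarrow> y \<in> (\<delta>(v' := \<delta> v' - \<delta> x)) v)"
    unfolding covers by blast
  also have "\<dots> \<longleftrightarrow> y \<in> \<delta> v \<and> (\<forall>x. detachable \<delta> v x \<longrightarrow> y \<notin> \<delta> x)"
    by (auto simp: fun_upd_apply)
  finally show ?thesis .
qed

lemma Pop_mem_closed:
  assumes \<epsilon>: "\<epsilon> \<in> Orn" and u: "u \<in> Pop V r par \<epsilon> w" "u \<noteq> w" and "x \<in> \<epsilon> u"
  shows "x \<in> Pop V r par \<epsilon> w"
proof -
  have "u \<in> \<epsilon> w" and u_kept: "\<And>x'. detachable \<epsilon> w x' \<Longrightarrow> u \<notin> \<epsilon> x'"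
    using u(1) Pop_mem_iff[OF \<epsilon>] by blast+
  have "u \<in> \<epsilon> x'" if det: "detachable \<epsilon> w x'" and "x \<in> \<epsilon> x'" for x'
  proof -
    have "x \<preceq> x'" "x \<preceq> u" using orn_below[OF \<epsilon>] \<open>x \<in> \<epsilon> x'\<close> \<open>x \<in> \<epsilon> u\<close> by blast+
    then consider "u \<preceq> x'" | "x' \<preceq> u" using tree_le_linear by blast
    then show ?thesis
    proof cases
      case 1
      then show ?thesis using orn_convex[OF \<epsilon> \<open>x \<in> \<epsilon> x'\<close> \<open>x \<preceq> u\<close>] by blast
    next
      case 2
      then have "x' \<in> \<epsilon> u" using orn_convex[OF \<epsilon> \<open>x \<in> \<epsilon> u\<close> \<open>x \<preceq> x'\<close>] by blast
      then have "u = x'"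
        using det \<open>u \<in> \<epsilon> w\<close> u(2) unfolding detachable_def outermost_def by blast
      then show ?thesis using orn_self[OF \<epsilon>] orn_in_V[OF \<epsilon> \<open>x \<in> \<epsilon> u\<close>] orn_top_in_V[OF \<epsilon>] \<open>x \<in> \<epsilon> u\<close> by blast
    qed
  qed
  moreover have "x \<in> \<epsilon> w" using orn_subset[OF \<epsilon> \<open>u \<in> \<epsilon> w\<close>] \<open>x \<in> \<epsilon> u\<close> by blast
  ultimately show ?thesis using Pop_mem_iff[OF \<epsilon>] u_kept by blast
qed

section \<open>The ornament \<open>o\<^sub>u\<close>\<close>

context
  fixes \<delta> assumes \<delta>: "\<delta> \<in> Orn"
begin

lemma o_orn_eq:
  assumes "u \<in> V"
  shows "o_orn V \<delta> u = {y \<in> V. \<forall>w\<in>V. \<delta> u \<subset> \<delta> w \<longrightarrow> y \<in> \<delta> w}"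
proof -
  let ?A = "{\<delta> w | w. w \<in> V \<and> \<delta> u \<subset> \<delta> w}"
  show ?thesis
  proof (cases "?A = {}")
    case True
    then show ?thesis unfolding o_orn_def Let_def by auto
  next
    case False
    have "?A = \<delta> ` {w \<in> V. \<delta> u \<subset> \<delta> w}" by blast
    then have "finite ?A" using finite_V by simp
    then obtain P where "P \<in> ?A" and P_min: "\<forall>S\<in>?A. S \<subseteq> P \<longrightarrow> P = S"
      using finite_has_minimal[OF _ False] by blast
    then obtain p where p: "p \<in> V" "\<delta> u \<subset> \<delta> p" "P = \<delta> p" by blast
    have least: "\<delta> p \<subseteq> \<delta> w" if w: "w \<in> V" "\<delta> u \<subset> \<delta> w" for w
    proof -
      have "u \<in> \<delta> p" "u \<in> \<delta> w" using orn_self[OF \<delta> \<open>u \<in> V\<close>] p(2) w(2) by blast+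
      then consider "\<delta> p \<subseteq> \<delta> w" | "\<delta> w \<subseteq> \<delta> p" using orn_nested[OF \<delta>] by blast
      then show ?thesis
      proof cases
        case 2
        moreover have "\<delta> w \<in> ?A" using w by blast
        ultimately show ?thesis using P_min p(3) by simp
      qed
    qed
    have "o_orn V \<delta> u = (THE S. S \<in> ?A \<and> (\<forall>S'\<in>?A. S' \<subseteq> S \<longrightarrow> S' = S))"
      unfolding o_orn_def Let_def using False by (simp only: if_False)
    also have "\<dots> = \<delta> p"
    proof (rule the_equality)
      show "\<delta> p \<in> ?A \<and> (\<forall>S'\<in>?A. S' \<subseteq> \<delta> p \<longrightarrow> S' = \<delta> p)" using p least by blast
    next
      fix S assume "S \<in> ?A \<and> (\<forall>S'\<in>?A. S' \<subseteq> S \<longrightarrow> S' = S)"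
      then show "S = \<delta> p" using p least by blast
    qed
    also have "\<dots> = {y \<in> V. \<forall>w\<in>V. \<delta> u \<subset> \<delta> w \<longrightarrow> y \<in> \<delta> w}"
      using least p orn_in_V[OF \<delta>] by blast
    finally show ?thesis .
  qed
qed

lemma o_orn_mem_iff:
  "u \<in> V \<Longrightarrow> y \<in> o_orn V \<delta> u \<longleftrightarrow> y \<in> V \<and> (\<forall>w\<in>V. \<delta> u \<subset> \<delta> w \<longrightarrow> y \<in> \<delta> w)"
  using o_orn_eq by blast

lemma o_orn_superset: "u \<in> V \<Longrightarrow> \<delta> u \<subseteq> o_orn V \<delta> u"
  using o_orn_mem_iff orn_in_V[OF \<delta>] by blast

lemma o_orn_subset_V: "u \<in> V \<Longrightarrow> o_orn V \<delta> u \<subseteq> V"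
  using o_orn_mem_iff by blast

lemma o_orn_least: "u \<in> V \<Longrightarrow> w \<in> V \<Longrightarrow> \<delta> u \<subset> \<delta> w \<Longrightarrow> o_orn V \<delta> u \<subseteq> \<delta> w"
  using o_orn_mem_iff by blast

lemma o_orn_inside: assumes "x \<in> \<delta> u" "x \<noteq> u" shows "o_orn V \<delta> x \<subseteq> \<delta> u"
  using o_orn_least[OF orn_in_V[OF \<delta> assms(1)] orn_top_in_V[OF \<delta> assms(1)]]
    orn_psubset[OF \<delta> assms] .

lemma o_orn_convex:
  assumes "u \<in> V" "y \<in> o_orn V \<delta> u" "y \<preceq> z" "z \<preceq> u"
  shows "z \<in> o_orn V \<delta> u"
  unfolding o_orn_mem_iff[OF \<open>u \<in> V\<close>]
proof (intro conjI ballI impI)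
  show "z \<in> V" using assms tree_le_in_V o_orn_subset_V by blast
next
  fix w assume "w \<in> V" "\<delta> u \<subset> \<delta> w"
  then have "y \<in> \<delta> w" "u \<in> \<delta> w"
    using assms(2) orn_self[OF \<delta> \<open>u \<in> V\<close>] unfolding o_orn_mem_iff[OF \<open>u \<in> V\<close>] by blast+
  then show "z \<in> \<delta> w" using orn_convex[OF \<delta>] orn_below[OF \<delta>] assms(3,4) tree_le_trans by blast
qed

lemma o_orn_child:
  assumes "c \<in> \<delta> u" "c \<noteq> r" "par c = u"
  shows "o_orn V \<delta> c = \<delta> u"
proof
  have "c \<in> V" using orn_in_V[OF \<delta> assms(1)] .
  then have "c \<noteq> u" using par_neq_self assms(2,3) by blast
  then show "o_orn V \<delta> c \<subseteq> \<delta> u" using o_orn_inside assms(1) by blast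
  have "\<delta> u \<subseteq> \<delta> w" if "w \<in> V" "\<delta> c \<subset> \<delta> w" for w
  proof -
    have "c \<in> \<delta> w" "c \<noteq> w" using that orn_self[OF \<delta> \<open>c \<in> V\<close>] by blast+
    then have "u \<in> \<delta> w" using orn_par[OF \<delta>] assms(3) by blast
    then show ?thesis using orn_subset[OF \<delta>] by blast
  qed
  then show "\<delta> u \<subseteq> o_orn V \<delta> c"
    using o_orn_mem_iff[OF \<open>c \<in> V\<close>] orn_in_V[OF \<delta>] by blast
qed

text \<open>The ornaments of \<open>\<delta>\<close> strictly containing \<open>\<delta> v\<close> also strictly contain \<open>\<delta> w\<close>.\<close>
lemma o_orn_mono:
  assumes "v \<in> V" "w \<in> o_orn V \<delta> v" "w \<preceq> v" "w \<noteq> v"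
  shows "o_orn V \<delta> w \<subseteq> o_orn V \<delta> v"
proof -
  have "w \<in> V" using assms(1,2) o_orn_subset_V by blast
  have "\<delta> w \<subset> \<delta> w'" if "w' \<in> V" "\<delta> v \<subset> \<delta> w'" for w'
  proof -
    have "w \<in> \<delta> w'" using assms(2) that unfolding o_orn_mem_iff[OF assms(1)] by blast
    moreover have "w \<noteq> w'"
    proof
      assume "w = w'"
      have "v \<in> \<delta> w'" using that(2) orn_self[OF \<delta> \<open>v \<in> V\<close>] by blast
      then have "v \<preceq> w" using orn_below[OF \<delta>] \<open>w = w'\<close> by blast
      then show False using tree_le_antisym[OF \<open>w \<in> V\<close> assms(3)] assms(4) by blast
    qed
    ultimately show ?thesis using orn_psubset[OF \<delta>] by blast
  qed
  then show ?thesis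
    unfolding subset_iff o_orn_mem_iff[OF \<open>w \<in> V\<close>] o_orn_mem_iff[OF \<open>v \<in> V\<close>] by metis
qed

lemma o_orn_entry:
  assumes "u \<in> V" "c \<in> o_orn V \<delta> u" "c \<notin> \<delta> u" "par c \<in> \<delta> u"
  shows "o_orn V \<delta> c = o_orn V \<delta> u"
proof
  have "c \<in> V" using assms(1,2) o_orn_subset_V by blast
  have "c \<preceq> u" using orn_below[OF \<delta> assms(4)] tree_le_par_self tree_le_trans by blast
  moreover have "c \<noteq> u" using assms(3) orn_self[OF \<delta> \<open>u \<in> V\<close>] by blast
  ultimately show "o_orn V \<delta> c \<subseteq> o_orn V \<delta> u" using o_orn_mono assms(1,2) by blast
  have "\<delta> u \<subset> \<delta> w" if "w \<in> V" "\<delta> c \<subset> \<delta> w" for w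
  proof -
    have "c \<in> \<delta> w" "c \<noteq> w" using that orn_self[OF \<delta> \<open>c \<in> V\<close>] by blast+
    then have "par c \<preceq> w" using orn_below[OF \<delta>] tree_le_par by blast
    have "\<not> w \<preceq> u"
    proof
      assume "w \<preceq> u"
      then have "w \<in> \<delta> u" using orn_convex[OF \<delta> assms(4) \<open>par c \<preceq> w\<close>] by blast
      then show False using orn_subset[OF \<delta>] \<open>c \<in> \<delta> w\<close> assms(3) by blast
    qed
    then have "u \<preceq> w" using tree_le_linear \<open>par c \<preceq> w\<close> orn_below[OF \<delta> assms(4)] by blast
    then have "u \<in> \<delta> w" using orn_convex[OF \<delta> \<open>c \<in> \<delta> w\<close> \<open>c \<preceq> u\<close>] by blast
    then have "\<delta> u \<subseteq> \<delta> w" using orn_subset[OF \<delta>] by blast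
    with \<open>c \<in> \<delta> w\<close> assms(3) show ?thesis by blast
  qed
  then show "o_orn V \<delta> u \<subseteq> o_orn V \<delta> c"
    unfolding subset_iff o_orn_mem_iff[OF \<open>c \<in> V\<close>] o_orn_mem_iff[OF \<open>u \<in> V\<close>] by metis
qed

end

section \<open>The preimage under \<open>Pop\<close>\<close>

lemma Delta_Delta: "x \<preceq> v \<Longrightarrow> Delta par (Delta par S v) x = Delta par S x"
  unfolding Delta_def using tree_le_trans by blast

text \<open>The preimage of \<open>\<delta>\<close> under \<open>Pop\<close>, whenever one exists.\<close>
definition expand :: "('a \<Rightarrow> 'a set) \<Rightarrow> 'a \<Rightarrow> 'a set" where
  "expand \<delta> u = (if u \<in> V then Delta par (o_orn V \<delta> u) u else {})"

context
  fixes \<delta> assumes \<delta>: "\<delta> \<in> Orn"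
begin

lemma expand_mem_iff: "u \<in> V \<Longrightarrow> y \<in> expand \<delta> u \<longleftrightarrow> y \<in> o_orn V \<delta> u \<and> y \<preceq> u"
  unfolding expand_def Delta_def by simp

lemma expand_mono:
  assumes "v \<in> V" "w \<in> o_orn V \<delta> v" "w \<preceq> v"
  shows "expand \<delta> w \<subseteq> expand \<delta> v"
proof (cases "w = v")
  case False
  have "w \<in> V" using assms(1,2) o_orn_subset_V[OF \<delta>] by blast
  have "o_orn V \<delta> w \<subseteq> o_orn V \<delta> v" using o_orn_mono[OF \<delta> assms False] .
  then show ?thesis
    unfolding subset_iff expand_mem_iff[OF \<open>w \<in> V\<close>] expand_mem_iff[OF \<open>v \<in> V\<close>]
    using assms(3) tree_le_trans by blast
qed simp

lemma expand_hangs_from: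
  assumes "u \<in> V" shows "hangs_from (expand \<delta> u) u"
  unfolding hangs_from_def
proof (intro conjI ballI impI)
  show "expand \<delta> u \<subseteq> V"
    using o_orn_subset_V[OF \<delta> assms] unfolding expand_mem_iff[OF assms] subset_iff by blast
  show "u \<in> expand \<delta> u"
    using o_orn_superset[OF \<delta> assms] orn_self[OF \<delta> assms] unfolding expand_mem_iff[OF assms] by auto
next
  fix w assume "w \<in> expand \<delta> u"
  then show "w \<preceq> u" unfolding expand_mem_iff[OF assms] by blast
next
  fix w assume w: "w \<in> expand \<delta> u" "w \<noteq> u"
  then have "w \<in> o_orn V \<delta> u" "w \<preceq> u" unfolding expand_mem_iff[OF assms] by blast+
  moreover have "par w \<preceq> u" using tree_le_par[OF \<open>w \<preceq> u\<close> w(2)] .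
  ultimately show "par w \<in> expand \<delta> u"
    using o_orn_convex[OF \<delta> assms] tree_le_par_self unfolding expand_mem_iff[OF assms] by blast
qed

lemma expand_laminar: "laminar (expand \<delta>)"
  unfolding laminar_def
proof (intro ballI)
  fix a b assume "a \<in> V" "b \<in> V"
  show "expand \<delta> a \<subseteq> expand \<delta> b \<or> expand \<delta> b \<subseteq> expand \<delta> a \<or> expand \<delta> a \<inter> expand \<delta> b = {}"
  proof (cases "expand \<delta> a \<inter> expand \<delta> b = {}")
    case False
    then obtain z where "z \<in> expand \<delta> a" "z \<in> expand \<delta> b" by blast
    then have za: "z \<in> o_orn V \<delta> a" "z \<preceq> a" and zb: "z \<in> o_orn V \<delta> b" "z \<preceq> b"
      unfolding expand_mem_iff[OF \<open>a \<in> V\<close>] expand_mem_iff[OF \<open>b \<in> V\<close>] by blast+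
    from tree_le_linear[OF za(2) zb(2)] show ?thesis
    proof
      assume "a \<preceq> b"
      then show ?thesis using expand_mono[OF \<open>b \<in> V\<close> o_orn_convex[OF \<delta> \<open>b \<in> V\<close> zb(1) za(2)]] by blast
    next
      assume "b \<preceq> a"
      then show ?thesis using expand_mono[OF \<open>a \<in> V\<close> o_orn_convex[OF \<delta> \<open>a \<in> V\<close> za(1) zb(2)]] by blast
    qed
  qed blast
qed

lemma expand_ornamentation: "expand \<delta> \<in> Orn"
  unfolding ornamentations_iff using expand_hangs_from expand_laminar by (simp add: expand_def)

lemma detachable_expand_child:
  assumes det: "detachable (expand \<delta>) v x" and "x \<in> \<delta> v"
  shows "x \<in> children V r par v"
proof -
  have "v \<in> V" "x \<in> expand \<delta> v" "x \<noteq> v" and out: "outermost (expand \<delta>) v x"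
    using det unfolding detachable_def by auto
  have "x \<preceq> v" using orn_below[OF \<delta> \<open>x \<in> \<delta> v\<close>] .
  obtain c where c: "x \<preceq> c" "c \<noteq> r" "par c = v" using exists_child_above[OF \<open>x \<preceq> v\<close> \<open>x \<noteq> v\<close>] by blast
  then have "c \<preceq> v" using tree_le_par_self by metis
  then have "c \<in> \<delta> v" using orn_convex[OF \<delta> \<open>x \<in> \<delta> v\<close> c(1)] by blast
  have "c \<in> V" using orn_in_V[OF \<delta> \<open>c \<in> \<delta> v\<close>] .
  have "x \<in> expand \<delta> c"
    using o_orn_child[OF \<delta> \<open>c \<in> \<delta> v\<close> c(2,3)] \<open>x \<in> \<delta> v\<close> c(1) unfolding expand_mem_iff[OF \<open>c \<in> V\<close>] by blast
  moreover have "c \<in> expand \<delta> v"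
    using \<open>c \<in> \<delta> v\<close> \<open>c \<preceq> v\<close> o_orn_superset[OF \<delta> \<open>v \<in> V\<close>] unfolding expand_mem_iff[OF \<open>v \<in> V\<close>] by blast
  moreover have "c \<noteq> v" using par_neq_self[OF \<open>c \<in> V\<close> c(2)] c(3) by blast
  ultimately have "c = x" using out unfolding outermost_def by blast
  then show ?thesis using \<open>c \<in> V\<close> c unfolding children_def by blast
qed

lemma Pop_expand_superset:
  assumes "v \<in> V" "y \<in> \<delta> v"
    and separated: "\<And>c. c \<in> children V r par v \<Longrightarrow> c \<in> \<delta> v \<Longrightarrow>
      Delta par (\<delta> v) c \<noteq> Delta par (o_orn V \<delta> v) c"
  shows "y \<in> Pop V r par (expand \<delta>) v"
proof -
  have "y \<in> expand \<delta> v"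
    using assms(2) o_orn_superset[OF \<delta> \<open>v \<in> V\<close>] orn_below[OF \<delta>] unfolding expand_mem_iff[OF \<open>v \<in> V\<close>] by blast
  moreover have "y \<notin> expand \<delta> x" if det: "detachable (expand \<delta>) v x" for x
  proof
    assume "y \<in> expand \<delta> x"
    have "x \<in> expand \<delta> v" and below_x: "Delta par (expand \<delta> v) x = expand \<delta> x"
      using det unfolding detachable_def by auto
    have "x \<in> V" "x \<preceq> v"
      using expand_hangs_from[OF \<open>v \<in> V\<close>] \<open>x \<in> expand \<delta> v\<close> unfolding hangs_from_def by auto
    have "y \<preceq> x" using \<open>y \<in> expand \<delta> x\<close> unfolding expand_mem_iff[OF \<open>x \<in> V\<close>] by blast
    then have "x \<in> \<delta> v" using orn_convex[OF \<delta> assms(2)] \<open>x \<preceq> v\<close> by blast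
    then have child: "x \<in> children V r par v" using detachable_expand_child[OF det] by blast
    then have "o_orn V \<delta> x = \<delta> v"
      using o_orn_child[OF \<delta> \<open>x \<in> \<delta> v\<close>] unfolding children_def by blast
    then have "Delta par (o_orn V \<delta> v) x = Delta par (\<delta> v) x"
      using Delta_Delta[OF \<open>x \<preceq> v\<close>] below_x \<open>v \<in> V\<close> \<open>x \<in> V\<close> unfolding expand_def by simp
    with separated child \<open>x \<in> \<delta> v\<close> show False by metis
  qed
  ultimately show ?thesis using Pop_mem_iff[OF expand_ornamentation] by blast
qed

lemma Pop_expand_subset:
  assumes "v \<in> V" "y \<in> expand \<delta> v" "y \<notin> \<delta> v"
  shows "y \<notin> Pop V r par (expand \<delta>) v"
proof -
  have "y \<in> o_orn V \<delta> v" "y \<preceq> v" using assms(2) unfolding expand_mem_iff[OF \<open>v \<in> V\<close>] by auto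
  obtain c where c: "y \<preceq> c" "c \<preceq> v" "c \<notin> \<delta> v" "c \<noteq> r" "par c \<in> \<delta> v"
    using exists_entry_edge[OF \<open>y \<preceq> v\<close> assms(3) orn_self[OF \<delta> \<open>v \<in> V\<close>]] by blast
  have "c \<in> o_orn V \<delta> v" using o_orn_convex[OF \<delta> \<open>v \<in> V\<close> \<open>y \<in> o_orn V \<delta> v\<close> c(1,2)] .
  have "c \<in> V" using o_orn_subset_V[OF \<delta> \<open>v \<in> V\<close>] \<open>c \<in> o_orn V \<delta> v\<close> by blast
  have expand_c: "expand \<delta> c = Delta par (o_orn V \<delta> v) c"
    using o_orn_entry[OF \<delta> \<open>v \<in> V\<close> \<open>c \<in> o_orn V \<delta> v\<close> c(3,5)] \<open>c \<in> V\<close> unfolding expand_def by simp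
  have "outermost (expand \<delta>) v c" unfolding outermost_def
  proof (intro ballI impI)
    fix w assume w: "w \<in> expand \<delta> v" "w \<noteq> v" "c \<in> expand \<delta> w"
    have "w \<preceq> v" "w \<in> V" using w(1) expand_hangs_from[OF \<open>v \<in> V\<close>] unfolding hangs_from_def by auto
    have "c \<in> o_orn V \<delta> w" "c \<preceq> w" using w(3) unfolding expand_mem_iff[OF \<open>w \<in> V\<close>] by auto
    show "w = c"
    proof (rule ccontr)
      assume "w \<noteq> c"
      then have "par c \<preceq> w" using tree_le_par \<open>c \<preceq> w\<close> by metis
      then have "w \<in> \<delta> v" using orn_convex[OF \<delta> c(5) _ \<open>w \<preceq> v\<close>] by blast
      then have "o_orn V \<delta> w \<subseteq> \<delta> v" using o_orn_inside[OF \<delta> _ w(2)] by blast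
      with \<open>c \<in> o_orn V \<delta> w\<close> c(3) show False by blast
    qed
  qed
  moreover have "Delta par (expand \<delta> v) c = expand \<delta> c"
    using Delta_Delta[OF c(2)] expand_c \<open>v \<in> V\<close> unfolding expand_def by simp
  moreover have "c \<in> expand \<delta> v" "c \<noteq> v"
    using \<open>c \<in> o_orn V \<delta> v\<close> c(2,3) orn_self[OF \<delta> \<open>v \<in> V\<close>] unfolding expand_mem_iff[OF \<open>v \<in> V\<close>] by auto
  ultimately have "detachable (expand \<delta>) v c" unfolding detachable_def using \<open>v \<in> V\<close> by blast
  moreover have "y \<in> expand \<delta> c" using expand_c \<open>y \<in> o_orn V \<delta> v\<close> c(1) unfolding Delta_def by blast
  ultimately show ?thesis using Pop_mem_iff[OF expand_ornamentation] by blast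
qed

lemma Pop_expand:
  assumes separated: "\<forall>u\<in>V. \<forall>c\<in>children V r par u. c \<in> \<delta> u \<longrightarrow>
      Delta par (\<delta> u) c \<noteq> Delta par (o_orn V \<delta> u) c"
  shows "Pop V r par (expand \<delta>) = \<delta>"
proof
  fix v
  show "Pop V r par (expand \<delta>) v = \<delta> v"
  proof (cases "v \<in> V")
    case True
    have "Pop V r par (expand \<delta>) v \<subseteq> expand \<delta> v" unfolding Pop_def by blast
    then show ?thesis
      using Pop_expand_superset[OF True] Pop_expand_subset[OF True] separated True by blast
  next
    case False
    then show ?thesis unfolding Pop_def expand_def using orn_outside[OF \<delta>] by simp
  qed
qed

end

lemma Pop_Delta_child_neq:
  assumes \<epsilon>: "\<epsilon> \<in> Orn" and \<delta>: "\<delta> \<in> Orn" and \<delta>_def: "\<delta> = Pop V r par \<epsilon>"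
    and "u \<in> V" "u' \<in> children V r par u" "u' \<in> \<delta> u"
  shows "Delta par (\<delta> u) u' \<noteq> Delta par (o_orn V \<delta> u) u'"
proof -
  have "u' \<in> V" "u' \<noteq> r" "par u' = u" using assms(5) unfolding children_def by auto
  then have "u' \<noteq> u" "u' \<preceq> u" using par_neq_self tree_le_par_self by metis+
  have "u' \<in> \<epsilon> u" using assms(6) Pop_mem_iff[OF \<epsilon>] \<delta>_def by blast
  have "outermost \<epsilon> u u'" unfolding outermost_def
  proof (intro ballI impI)
    fix w assume w: "w \<in> \<epsilon> u" "w \<noteq> u" "u' \<in> \<epsilon> w"
    show "w = u'"
    proof (rule ccontr)
      assume "w \<noteq> u'"
      then have "u \<preceq> w" using tree_le_par orn_below[OF \<epsilon> w(3)] \<open>par u' = u\<close> by metis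
      then show False using tree_le_antisym[OF \<open>u \<in> V\<close> _ orn_below[OF \<epsilon> w(1)]] w(2) by blast
    qed
  qed
  then obtain x where det: "detachable \<epsilon> u x" and "x \<preceq> u'"
    using exists_detachable_below[OF \<epsilon> \<open>u \<in> V\<close> \<open>u' \<in> \<epsilon> u\<close> \<open>u' \<noteq> u\<close>] by blast
  have "x \<in> \<epsilon> u" "x \<in> V" using det orn_in_V[OF \<epsilon>] unfolding detachable_def by auto
  have "x \<notin> \<delta> u" using det orn_self[OF \<epsilon> \<open>x \<in> V\<close>] Pop_mem_iff[OF \<epsilon>] \<delta>_def by blast
  moreover have "x \<in> o_orn V \<delta> u"
    unfolding o_orn_mem_iff[OF \<delta> \<open>u \<in> V\<close>]
  proof (intro conjI ballI impI)
    fix w assume "w \<in> V" "\<delta> u \<subset> \<delta> w"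
    then have "u \<in> Pop V r par \<epsilon> w" "u \<noteq> w" using orn_self[OF \<delta> \<open>u \<in> V\<close>] \<delta>_def by blast+
    then show "x \<in> \<delta> w" using Pop_mem_closed[OF \<epsilon> _ _ \<open>x \<in> \<epsilon> u\<close>] \<delta>_def by blast
  qed (rule \<open>x \<in> V\<close>)
  ultimately show ?thesis using \<open>x \<preceq> u'\<close> unfolding Delta_def by blast
qed

end

theorem theorem1p2:
  assumes "rooted_tree V r par"
    and "\<delta> \<in> ornamentations V r par"
  shows "\<delta> \<in> Pop V r par ` ornamentations V r par \<longleftrightarrow>
    (\<forall>u\<in>V. \<forall>u'\<in>children V r par u. u' \<in> \<delta> u \<longrightarrow>
        Delta par (\<delta> u) u' \<noteq> Delta par (o_orn V \<delta> u) u')"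
proof -
  interpret rtree V r par using assms(1) by unfold_locales
  show ?thesis
  proof
    assume "\<delta> \<in> Pop V r par ` ornamentations V r par"
    then obtain \<epsilon> where "\<epsilon> \<in> ornamentations V r par" "\<delta> = Pop V r par \<epsilon>" by blast
    then show "\<forall>u\<in>V. \<forall>u'\<in>children V r par u. u' \<in> \<delta> u \<longrightarrow>
        Delta par (\<delta> u) u' \<noteq> Delta par (o_orn V \<delta> u) u'"
      using Pop_Delta_child_neq assms(2) by blast
  next
    assume "\<forall>u\<in>V. \<forall>u'\<in>children V r par u. u' \<in> \<delta> u \<longrightarrow>
        Delta par (\<delta> u) u' \<noteq> Delta par (o_orn V \<delta> u) u'"
    then have "Pop V r par (expand \<delta>) = \<delta>" using Pop_expand[OF assms(2)] by blast
    then show "\<delta> \<in> Pop V r par ` ornamentations V r par"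
      using expand_ornamentation[OF assms(2)] by (metis image_eqI)
  qed
qed

end
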